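(* Let $w\ge 3$ and let $C_1$ be the set of vertices $x=(x_1,\dots,x_{2w})$ of the Johnson graph $J(2w,w)$ such that $(x_1,x_2,x_3,x_4,x_5)\in B$, where $B=\{(1,0,0,0,0),(1,1,0,0,0),(1,0,1,0,0),(0,0,0,1,1),(0,1,1,1,1),(0,0,1,1,1),(0,1,0,1,1),(1,1,1,0,0)\}$, and let $C_2$ be the complement of $C_1$. Then $(C_1,C_2)$ is an equitable partition with quotient matrix $\begin{pmatrix} w^2-3w+2 & 3w-2\\ w & w^2-w\end{pmatrix}$.
   Context: The Johnson graph $J(n,w)$ has as vertices the binary vectors of length $n$ with exactly $w$ ones; two vertices are adjacent iff they have exactly $w-1$ common ones. A partition $(C_1,C_2)$ of the vertex set is equitable with quotient matrix $S=(s_{ij})$ if every vertex of $C_i$ has exactly $s_{ij}$ neighbours in $C_j$. *)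

theory Defs
  imports Main
begin

text \<open>Binary vectors of length n are lists over {0,1}; position i (0-based) holds x_(i+1).\<close>

definition ones :: "nat list \<Rightarrow> nat set" where
  "ones x = {i. i < length x \<and> x ! i = 1}"

definition johnson_vertices :: "nat \<Rightarrow> nat \<Rightarrow> nat list set" where
  "johnson_vertices n w =
     {x. length x = n \<and> set x \<subseteq> {0, 1} \<and> card (ones x) = w}"

definition johnson_adj :: "nat \<Rightarrow> nat list \<Rightarrow> nat list \<Rightarrow> bool" where
  "johnson_adj w x y \<longleftrightarrow> card (ones x \<inter> ones y) = w - 1"

definition equitable_partition ::
  "'v set \<Rightarrow> ('v \<Rightarrow> 'v \<Rightarrow> bool) \<Rightarrow> nat \<Rightarrow> (nat \<Rightarrow> 'v set) \<Rightarrow> (nat \<Rightarrow> nat \<Rightarrow> nat) \<Rightarrow> bool" where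
  "equitable_partition V adj m P S \<longleftrightarrow>
     (\<Union>i\<in>{1..m}. P i) = V \<and>
     (\<forall>i\<in>{1..m}. P i \<noteq> {}) \<and>
     (\<forall>i\<in>{1..m}. \<forall>j\<in>{1..m}. i \<noteq> j \<longrightarrow> P i \<inter> P j = {}) \<and>
     (\<forall>i\<in>{1..m}. \<forall>j\<in>{1..m}. \<forall>x\<in>P i. card {y\<in>P j. adj x y} = S i j)"

definition B_set :: "nat list set" where
  "B_set = {[1,0,0,0,0],[1,1,0,0,0],[1,0,1,0,0],[0,0,0,1,1],
            [0,1,1,1,1],[0,0,1,1,1],[0,1,0,1,1],[1,1,1,0,0]}"

definition C1 :: "nat \<Rightarrow> nat list set" where
  "C1 w = {x \<in> johnson_vertices (2*w) w. take 5 x \<in> B_set}"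

definition C2 :: "nat \<Rightarrow> nat list set" where
  "C2 w = johnson_vertices (2*w) w - C1 w"

end

theory Submission
  imports Defs
begin

text \<open>
  The neighbours of a vertex x of J(n, w) are obtained by moving one of its w ones to one of
  its n - w zeros. Whether such a neighbour lies in C1 depends only on the pattern P of ones
  of x in the first five coordinates and on whether the removed and the added one lie inside
  or outside this prefix. Grouping the moves accordingly, the number of neighbours in C1 is
  s + d z + a u, plus u z if P is a pattern of B, where u = w - |P| and z = w + |P| - 5 are
  the numbers of ones and zeros of x outside the prefix and s, d, a depend on P only.
  Checking the 32 possible patterns shows that this equals w^2 - 3w + 2 for patterns of B and
  w otherwise; since J(2w, w) is w^2-regular, the remaining entries of the quotient matrix follow.
\<close>

section \<open>Neighbours in the Johnson graph\<close>

definition move_one :: "nat list \<Rightarrow> nat \<Rightarrow> nat \<Rightarrow> nat list" where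
  "move_one x i j = x[i := 0, j := 1]"

lemma finite_ones [simp]: "finite (ones x)"
  by (simp add: ones_def)

lemma ones_subset_lessThan: "ones x \<subseteq> {..<length x}"
  by (auto simp: ones_def)

lemma ones_take: "ones (take m x) = ones x \<inter> {..<m}"
  by (auto simp: ones_def)

lemma length_move_one [simp]: "length (move_one x i j) = length x"
  by (simp add: move_one_def)

lemma set_move_one_subset: "set x \<subseteq> {0, 1} \<Longrightarrow> set (move_one x i j) \<subseteq> {0, 1}"
  unfolding move_one_def by (auto dest: set_update_subset_insert[THEN subsetD])

lemma ones_move_one:
  assumes "j < length x"
  shows "ones (move_one x i j) = ones x - {i} \<union> {j}"
  using assms by (cases "i < length x") (auto simp: ones_def move_one_def nth_list_update)

lemma binary_list_eqI:
  assumes "length x = length y" "set x \<subseteq> {0, 1}" "set y \<subseteq> {0, 1}" "ones x = ones y"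
  shows "x = y"
proof (rule nth_equalityI)
  show "length x = length y"
    by (rule assms(1))
next
  fix k assume k: "k < length x"
  have "x ! k \<in> set x" "y ! k \<in> set y"
    using assms(1) k by simp_all
  then have "x ! k \<in> {0, 1}" "y ! k \<in> {0, 1}"
    using assms(2,3) by blast+
  moreover have "x ! k = 1 \<longleftrightarrow> y ! k = 1"
  proof -
    have "k \<in> ones x \<longleftrightarrow> k \<in> ones y" using assms(4) by simp
    then show ?thesis using assms(1) k by (simp add: ones_def)
  qed
  ultimately show "x ! k = y ! k" by auto
qed

lemma finite_johnson_vertices: "finite (johnson_vertices n w)"
proof (rule finite_subset)
  show "johnson_vertices n w \<subseteq> {xs. set xs \<subseteq> {0, 1} \<and> length xs = n}"
    by (auto simp: johnson_vertices_def)
qed (rule finite_lists_length_eq, simp)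

lemma replicate_in_johnson_vertices: "replicate w 1 @ replicate k 0 \<in> johnson_vertices (w + k) w"
proof -
  have nth: "(replicate w (1::nat) @ replicate k 0) ! l = 1 \<longleftrightarrow> l < w" if "l < w + k" for l
    using that by (simp add: nth_append)
  then have "ones (replicate w 1 @ replicate k 0) = {..<w}"
    unfolding ones_def by fastforce
  then show ?thesis
    by (simp add: johnson_vertices_def set_replicate_conv_if)
qed

lemma move_one_johnson_neighbour:
  assumes x: "x \<in> johnson_vertices n w" and i: "i \<in> ones x" and j: "j \<in> {..<n} - ones x"
  shows "move_one x i j \<in> johnson_vertices n w" "johnson_adj w x (move_one x i j)"
proof -
  have lx: "length x = n" and cx: "card (ones x) = w" and sx: "set x \<subseteq> {0, 1}"
    using x by (auto simp: johnson_vertices_def)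
  have "j < length x"
    using j lx by simp
  then have ones_y: "ones (move_one x i j) = ones x - {i} \<union> {j}"
    by (rule ones_move_one)
  have "card (ones (move_one x i j)) = Suc (card (ones x - {i}))"
    using ones_y j by simp
  also have "\<dots> = w"
    using card_Suc_Diff1[OF finite_ones i] cx by simp
  finally show "move_one x i j \<in> johnson_vertices n w"
    using lx set_move_one_subset[OF sx] by (simp add: johnson_vertices_def)
  have "ones x \<inter> ones (move_one x i j) = ones x - {i}"
    using ones_y j by auto
  then show "johnson_adj w x (move_one x i j)"
    using i cx by (simp add: johnson_adj_def)
qed

lemma johnson_neighbour_is_move_one:
  assumes x: "x \<in> johnson_vertices n w" and y: "y \<in> johnson_vertices n w"
    and adj: "johnson_adj w x y" and w: "w \<ge> 1"
  obtains i j where "i \<in> ones x" "j \<in> {..<n} - ones x" "y = move_one x i j"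
proof -
  have lx: "length x = n" and cx: "card (ones x) = w" and sx: "set x \<subseteq> {0, 1}"
    using x by (auto simp: johnson_vertices_def)
  have ly: "length y = n" and cy: "card (ones y) = w" and sy: "set y \<subseteq> {0, 1}"
    using y by (auto simp: johnson_vertices_def)
  have common: "card (ones x \<inter> ones y) = w - 1"
    using adj by (simp add: johnson_adj_def)
  have "card (ones x - ones y) = 1"
    using card_Diff_subset_Int[of "ones x" "ones y"] common cx w by simp
  then obtain i where i: "ones x - ones y = {i}"
    by (rule card_1_singletonE)
  have "card (ones y - ones x) = 1"
    using card_Diff_subset_Int[of "ones y" "ones x"] common cy w by (simp add: Int_commute)
  then obtain j where j: "ones y - ones x = {j}"
    by (rule card_1_singletonE)
  have jn: "j < n"
    using j ones_subset_lessThan[of y] ly by auto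
  have "ones y = ones x - {i} \<union> {j}"
    using i j by blast
  also have "\<dots> = ones (move_one x i j)"
    using ones_move_one[of j x i] jn lx by simp
  finally have "y = move_one x i j"
    using binary_list_eqI[of y "move_one x i j"] ly lx sy set_move_one_subset[OF sx] by simp
  moreover have "i \<in> ones x" "j \<in> {..<n} - ones x"
    using i j jn by auto
  ultimately show thesis
    using that by blast
qed

lemma move_one_inj:
  assumes i: "i \<in> ones x" and j: "j \<in> {..<length x} - ones x"
    and i': "i' \<in> ones x" and j': "j' \<in> {..<length x} - ones x"
    and same: "move_one x i j = move_one x i' j'"
  shows "i = i'" "j = j'"
proof -
  have "ones x - {i} \<union> {j} = ones (move_one x i j)"
    using j by (simp add: ones_move_one)
  also have "\<dots> = ones x - {i'} \<union> {j'}"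
    using same j' by (simp add: ones_move_one)
  finally have eq: "ones x - {i} \<union> {j} = ones x - {i'} \<union> {j'}" .
  show "i = i'"
  proof (rule ccontr)
    assume "i \<noteq> i'"
    then have "i \<in> ones x - {i} \<union> {j}"
      using eq i by blast
    then show False
      using i j by blast
  qed
  have "j \<in> ones x - {i'} \<union> {j'}"
    using eq by blast
  then show "j = j'"
    using j by blast
qed

lemma johnson_neighbours_bij:
  assumes x: "x \<in> johnson_vertices n w" and w: "w \<ge> 1"
  shows "bij_betw (\<lambda>(i, j). move_one x i j) (ones x \<times> ({..<n} - ones x))
           {y \<in> johnson_vertices n w. johnson_adj w x y}"
proof (rule bij_betw_imageI)
  have lx: "length x = n"
    using x by (simp add: johnson_vertices_def)
  show "inj_on (\<lambda>(i, j). move_one x i j) (ones x \<times> ({..<n} - ones x))"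
  proof (rule inj_onI)
    fix p q
    assume p: "p \<in> ones x \<times> ({..<n} - ones x)" and q: "q \<in> ones x \<times> ({..<n} - ones x)"
      and same: "(\<lambda>(i, j). move_one x i j) p = (\<lambda>(i, j). move_one x i j) q"
    obtain i j i' j' where "p = (i, j)" "q = (i', j')"
      by fastforce
    then show "p = q"
      using p q same move_one_inj[of i x j i' j'] lx by simp
  qed
  show "(\<lambda>(i, j). move_one x i j) ` (ones x \<times> ({..<n} - ones x))
          = {y \<in> johnson_vertices n w. johnson_adj w x y}"
  proof (intro equalityI subsetI)
    fix y assume "y \<in> (\<lambda>(i, j). move_one x i j) ` (ones x \<times> ({..<n} - ones x))"
    then obtain i j where "i \<in> ones x" "j \<in> {..<n} - ones x" "y = move_one x i j"
      by auto
    then show "y \<in> {y \<in> johnson_vertices n w. johnson_adj w x y}"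
      using move_one_johnson_neighbour[OF x] by blast
  next
    fix y assume "y \<in> {y \<in> johnson_vertices n w. johnson_adj w x y}"
    then obtain i j where "i \<in> ones x" "j \<in> {..<n} - ones x" "y = move_one x i j"
      using johnson_neighbour_is_move_one[OF x _ _ w] by blast
    then show "y \<in> (\<lambda>(i, j). move_one x i j) ` (ones x \<times> ({..<n} - ones x))"
      by blast
  qed
qed

lemma card_johnson_neighbours_with:
  assumes "x \<in> johnson_vertices n w" "w \<ge> 1"
  shows "card {y \<in> johnson_vertices n w. Q y \<and> johnson_adj w x y}
       = card {(i, j) \<in> ones x \<times> ({..<n} - ones x). Q (move_one x i j)}"
proof -
  let ?f = "\<lambda>(i, j). move_one x i j"
  have "bij_betw ?f {p \<in> ones x \<times> ({..<n} - ones x). Q (?f p)}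
          {y \<in> {y \<in> johnson_vertices n w. johnson_adj w x y}. Q y}"
    by (rule bij_betw_Collect[OF johnson_neighbours_bij[OF assms]]) simp
  moreover have "{p \<in> ones x \<times> ({..<n} - ones x). Q (?f p)}
      = {(i, j) \<in> ones x \<times> ({..<n} - ones x). Q (move_one x i j)}"
    by auto
  moreover have "{y \<in> {y \<in> johnson_vertices n w. johnson_adj w x y}. Q y}
      = {y \<in> johnson_vertices n w. Q y \<and> johnson_adj w x y}"
    by blast
  ultimately show ?thesis
    by (simp add: bij_betw_same_card)
qed

lemma card_johnson_neighbours:
  assumes x: "x \<in> johnson_vertices n w" and w: "w \<ge> 1"
  shows "card {y \<in> johnson_vertices n w. johnson_adj w x y} = w * (n - w)"
proof -
  have "card {y \<in> johnson_vertices n w. johnson_adj w x y} = card (ones x \<times> ({..<n} - ones x))"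
    using bij_betw_same_card[OF johnson_neighbours_bij[OF x w]] by simp
  moreover have "ones x \<subseteq> {..<n}" "card (ones x) = w"
    using x ones_subset_lessThan[of x] by (auto simp: johnson_vertices_def)
  ultimately show ?thesis
    by (simp add: card_cartesian_product card_Diff_subset)
qed

section \<open>Counting neighbours by prefix pattern\<close>

text \<open>
  For a pattern P of ones in the prefix {..<m}: the number of moves of a one inside the prefix,
  of a one out of the prefix, and of a one into the prefix, that yield a pattern in F.
\<close>

definition pattern_swaps :: "nat set set \<Rightarrow> nat \<Rightarrow> nat set \<Rightarrow> nat" where
  "pattern_swaps F m P = card {(i, j) \<in> P \<times> ({..<m} - P). insert j (P - {i}) \<in> F}"

definition pattern_drops :: "nat set set \<Rightarrow> nat set \<Rightarrow> nat" where
  "pattern_drops F P = card {i \<in> P. P - {i} \<in> F}"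

definition pattern_adds :: "nat set set \<Rightarrow> nat \<Rightarrow> nat set \<Rightarrow> nat" where
  "pattern_adds F m P = card {j \<in> {..<m} - P. insert j P \<in> F}"

lemma card_moves_into_pattern_family:
  fixes A N :: "nat set"
  assumes N: "finite N" and AN: "A \<subseteq> N" and mN: "{..<m} \<subseteq> N"
  defines "P \<equiv> A \<inter> {..<m}" and "Z \<equiv> N - A - {..<m}"
  shows "card {(i, j) \<in> A \<times> (N - A). (A - {i} \<union> {j}) \<inter> {..<m} \<in> F}
       = pattern_swaps F m P + pattern_drops F P * card Z + pattern_adds F m P * card (A - P)
         + (if P \<in> F then card (A - P) * card Z else 0)"
proof -
  define Q where "Q = {..<m} - P"
  define S1 where "S1 = {(i, j) \<in> P \<times> Q. insert j (P - {i}) \<in> F}"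
  define S2 where "S2 = {i \<in> P. P - {i} \<in> F} \<times> Z"
  define S3 where "S3 = (A - P) \<times> {j \<in> Q. insert j P \<in> F}"
  define S4 where "S4 = (if P \<in> F then (A - P) \<times> Z else {})"
  have "(i, j) \<in> {(i, j) \<in> A \<times> (N - A). (A - {i} \<union> {j}) \<inter> {..<m} \<in> F}
      \<longleftrightarrow> (i, j) \<in> S1 \<union> S2 \<union> S3 \<union> S4" for i j
  proof -
    have "(A - {i} \<union> {j}) \<inter> {..<m} = (if j < m then insert j (P - {i}) else P - {i})"
      by (auto simp: P_def)
    moreover have "P - {i} = P" if "i \<notin> P"
      using that by simp
    ultimately show ?thesis
      using mN by (cases "i < m"; cases "j < m")
        (auto simp: S1_def S2_def S3_def S4_def P_def Q_def Z_def)
  qed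
  then have "{(i, j) \<in> A \<times> (N - A). (A - {i} \<union> {j}) \<inter> {..<m} \<in> F} = S1 \<union> S2 \<union> S3 \<union> S4"
    by (auto simp: set_eq_iff)
  moreover have "finite A" "finite Z"
    using N AN finite_subset by (auto simp: Z_def)
  then have "finite S1" "finite S2" "finite S3" "finite S4"
    by (auto intro: finite_subset[of _ "P \<times> Q"] simp: S1_def S2_def S3_def S4_def P_def Q_def)
  moreover have "S1 \<inter> S2 = {}" "(S1 \<union> S2) \<inter> S3 = {}" "(S1 \<union> S2 \<union> S3) \<inter> S4 = {}"
    by (auto simp: S1_def S2_def S3_def S4_def P_def Q_def Z_def)
  ultimately have "card {(i, j) \<in> A \<times> (N - A). (A - {i} \<union> {j}) \<inter> {..<m} \<in> F}
      = card S1 + card S2 + card S3 + card S4"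
    by (simp add: card_Un_disjoint)
  then show ?thesis
    by (simp add: S1_def S2_def S3_def S4_def Q_def pattern_swaps_def pattern_drops_def
        pattern_adds_def card_cartesian_product)
qed

lemma card_ones_outside_prefix:
  assumes x: "x \<in> johnson_vertices n w" and m: "m \<le> n"
  defines "P \<equiv> ones x \<inter> {..<m}"
  shows "card (ones x - {..<m}) + card P = w"
    and "card ({..<n} - ones x - {..<m}) + m + w = n + card P"
proof -
  have lx: "length x = n" and cx: "card (ones x) = w"
    using x by (auto simp: johnson_vertices_def)
  have A: "ones x \<subseteq> {..<n}"
    using ones_subset_lessThan[of x] lx by simp
  have "ones x = (ones x - {..<m}) \<union> P" "(ones x - {..<m}) \<inter> P = {}"
    by (auto simp: P_def)
  then show "card (ones x - {..<m}) + card P = w"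
    using cx card_Un_disjoint[of "ones x - {..<m}" P] by (simp add: P_def)
  have "{..<n} - ones x = ({..<n} - ones x - {..<m}) \<union> ({..<m} - P)"
    "({..<n} - ones x - {..<m}) \<inter> ({..<m} - P) = {}"
    using m by (auto simp: P_def)
  moreover have "card ({..<n} - ones x) + w = n"
    using A cx card_mono[of "{..<n}" "ones x"] by (simp add: card_Diff_subset)
  moreover have "card ({..<m} - P) + card P = m"
    using card_mono[of "{..<m}" P] by (simp add: P_def card_Diff_subset)
  ultimately show "card ({..<n} - ones x - {..<m}) + m + w = n + card P"
    using card_Un_disjoint[of "{..<n} - ones x - {..<m}" "{..<m} - P"] by simp
qed

lemma card_neighbours_with_prefix_pattern:
  assumes x: "x \<in> johnson_vertices n w" and w: "w \<ge> 1" and m: "m \<le> n"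
  defines "P \<equiv> ones x \<inter> {..<m}"
  shows "card {y \<in> johnson_vertices n w. ones y \<inter> {..<m} \<in> F \<and> johnson_adj w x y}
       = pattern_swaps F m P + pattern_drops F P * (n + card P - w - m)
         + pattern_adds F m P * (w - card P)
         + (if P \<in> F then (w - card P) * (n + card P - w - m) else 0)"
proof -
  have lx: "length x = n"
    using x by (simp add: johnson_vertices_def)
  have A: "ones x \<subseteq> {..<n}"
    using ones_subset_lessThan[of x] lx by simp
  have "card {y \<in> johnson_vertices n w. ones y \<inter> {..<m} \<in> F \<and> johnson_adj w x y}
      = card {(i, j) \<in> ones x \<times> ({..<n} - ones x). ones (move_one x i j) \<inter> {..<m} \<in> F}"
    by (rule card_johnson_neighbours_with[OF x w])
  also have "{(i, j) \<in> ones x \<times> ({..<n} - ones x). ones (move_one x i j) \<inter> {..<m} \<in> F}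
      = {(i, j) \<in> ones x \<times> ({..<n} - ones x). (ones x - {i} \<union> {j}) \<inter> {..<m} \<in> F}"
    using lx by (auto simp: ones_move_one)
  also have "card \<dots> = pattern_swaps F m P
      + pattern_drops F P * card ({..<n} - ones x - {..<m})
      + pattern_adds F m P * card (ones x - P)
      + (if P \<in> F then card (ones x - P) * card ({..<n} - ones x - {..<m}) else 0)"
    unfolding P_def using A m by (intro card_moves_into_pattern_family) auto
  also have "ones x - P = ones x - {..<m}"
    by (auto simp: P_def)
  also have "card (ones x - {..<m}) = w - card P"
    using card_ones_outside_prefix(1)[OF x m] by (simp add: P_def)
  also have "card ({..<n} - ones x - {..<m}) = n + card P - w - m"
    using card_ones_outside_prefix(2)[OF x m] by (simp add: P_def)
  finally show ?thesis .
qed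

lemma take_in_iff_prefix_ones_in:
  assumes L: "\<forall>l \<in> L. length l = m \<and> set l \<subseteq> {0, 1}"
    and y: "m \<le> length y" "set y \<subseteq> {0, 1}"
  shows "take m y \<in> L \<longleftrightarrow> ones y \<inter> {..<m} \<in> ones ` L"
proof
  assume "take m y \<in> L"
  then have "ones (take m y) \<in> ones ` L"
    by (rule imageI)
  then show "ones y \<inter> {..<m} \<in> ones ` L"
    by (simp only: ones_take)
next
  assume "ones y \<inter> {..<m} \<in> ones ` L"
  then obtain l where l: "ones (take m y) = ones l" "l \<in> L"
    unfolding ones_take by (rule imageE)
  have "set (take m y) \<subseteq> {0, 1}"
    by (rule subset_trans[OF set_take_subset y(2)])
  then have "take m y = l"
    using binary_list_eqI[of "take m y" l] l L y(1) by simp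
  with l(2) show "take m y \<in> L"
    by (simp only:)
qed

section \<open>The partition of J(2w, w)\<close>

definition B_patterns :: "nat set set" where
  "B_patterns = ones ` B_set"

text \<open>An executable form of ones, so that code_simp can evaluate it on the lists of B_set.\<close>

lemma ones_eq_filter: "ones x = Set.filter (\<lambda>i. x ! i = 1) {..<length x}"
  by (auto simp: ones_def)

lemma B_patterns_eq:
  "B_patterns = {{0}, {0, 1}, {0, 2}, {3, 4}, {1, 2, 3, 4}, {2, 3, 4}, {1, 3, 4}, {0, 1, 2}}"
  unfolding B_patterns_def B_set_def ones_eq_filter by code_simp

lemma C1_eq:
  assumes "3 \<le> w"
  shows "C1 w = {y \<in> johnson_vertices (2 * w) w. ones y \<inter> {..<5} \<in> B_patterns}"
proof -
  have "\<forall>l \<in> B_set. length l = 5 \<and> set l \<subseteq> {0, 1}"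
    by (simp add: B_set_def)
  then show ?thesis
    using assms take_in_iff_prefix_ones_in[of B_set 5]
    by (auto simp: C1_def B_patterns_def johnson_vertices_def)
qed

text \<open>
  With u = w - k and z = w + k - 5, the count s + d z + a u (+ u z for patterns of B) is
  (d + a) w + s + d (k - 5) - a k (+ w^2 - 5w - k^2 + 5k); these are the conditions for it to
  be w^2 - 3w + 2, resp. w, identically in w.
\<close>

lemma B_pattern_coefficients:
  "\<forall>P \<in> Pow {..<5}.
     let k = int (card P); s = int (pattern_swaps B_patterns 5 P);
         d = int (pattern_drops B_patterns P); a = int (pattern_adds B_patterns 5 P)
     in if P \<in> B_patterns then d + a = 2 \<and> s + d * (k - 5) - a * k = k\<^sup>2 - 5 * k + 2
        else d + a = 1 \<and> s + d * (k - 5) - a * k = 0"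
  unfolding B_patterns_eq pattern_swaps_def pattern_drops_def pattern_adds_def
  by code_simp

lemma B_pattern_neighbour_count:
  assumes P: "P \<subseteq> {..<5}" and k: "card P \<le> w" "5 \<le> w + card P"
  shows "pattern_swaps B_patterns 5 P + pattern_drops B_patterns P * (w + card P - 5)
         + pattern_adds B_patterns 5 P * (w - card P)
         + (if P \<in> B_patterns then (w - card P) * (w + card P - 5) else 0)
       = (if P \<in> B_patterns then w\<^sup>2 - 3 * w + 2 else w)"
    (is "?count = _")
proof -
  define k where "k = int (card P)"
  define s where "s = int (pattern_swaps B_patterns 5 P)"
  define d where "d = int (pattern_drops B_patterns P)"
  define a where "a = int (pattern_adds B_patterns 5 P)"
  have coeffs: "if P \<in> B_patterns then d + a = 2 \<and> s + d * (k - 5) - a * k = k\<^sup>2 - 5 * k + 2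
      else d + a = 1 \<and> s + d * (k - 5) - a * k = 0"
    using B_pattern_coefficients P unfolding k_def s_def d_def a_def Let_def by blast
  have u: "int (w - card P) = int w - k" and z: "int (w + card P - 5) = int w + k - 5"
    using k by (simp_all add: k_def of_nat_diff)
  have "int ?count = s + d * (int w + k - 5) + a * (int w - k)
      + (if P \<in> B_patterns then (int w - k) * (int w + k - 5) else 0)"
    by (simp add: s_def d_def a_def u z)
  also have "\<dots> = (s + d * (k - 5) - a * k) + (d + a) * int w
      + (if P \<in> B_patterns then (int w - k) * (int w + k - 5) else 0)"
    by (simp add: algebra_simps)
  also have "\<dots> = (if P \<in> B_patterns then int w ^ 2 - 3 * int w + 2 else int w)"
    using coeffs by (simp split: if_splits) (simp add: algebra_simps power2_eq_square)
  also have "\<dots> = int (if P \<in> B_patterns then w\<^sup>2 - 3 * w + 2 else w)"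
    using k by (simp add: of_nat_diff power2_eq_square)
  finally show ?thesis
    by (simp only: of_nat_eq_iff)
qed

lemma card_C1_neighbours:
  assumes w: "3 \<le> w" and x: "x \<in> johnson_vertices (2 * w) w"
  shows "card {y \<in> C1 w. johnson_adj w x y} = (if x \<in> C1 w then w\<^sup>2 - 3 * w + 2 else w)"
proof -
  define P where "P = ones x \<inter> {..<5}"
  have m: "5 \<le> 2 * w"
    using w by simp
  have k: "card P \<le> w" "5 \<le> w + card P"
    using card_ones_outside_prefix[OF x m] by (simp_all add: P_def)
  have "card {y \<in> C1 w. johnson_adj w x y}
      = card {y \<in> johnson_vertices (2 * w) w. ones y \<inter> {..<5} \<in> B_patterns \<and> johnson_adj w x y}"
    by (simp add: C1_eq[OF w] conj_assoc)
  also have "\<dots> = pattern_swaps B_patterns 5 P + pattern_drops B_patterns P * (2 * w + card P - w - 5)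
      + pattern_adds B_patterns 5 P * (w - card P)
      + (if P \<in> B_patterns then (w - card P) * (2 * w + card P - w - 5) else 0)"
    using card_neighbours_with_prefix_pattern[OF x _ m] w by (simp add: P_def)
  also have "2 * w + card P - w - 5 = w + card P - 5"
    by simp
  also have "pattern_swaps B_patterns 5 P + pattern_drops B_patterns P * (w + card P - 5)
      + pattern_adds B_patterns 5 P * (w - card P)
      + (if P \<in> B_patterns then (w - card P) * (w + card P - 5) else 0)
      = (if P \<in> B_patterns then w\<^sup>2 - 3 * w + 2 else w)"
    by (rule B_pattern_neighbour_count) (use k in \<open>auto simp: P_def\<close>)
  also have "P \<in> B_patterns \<longleftrightarrow> x \<in> C1 w"
    using x by (simp add: C1_eq[OF w] P_def)
  finally show ?thesis .
qed

lemma equitable_partition_complementI: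
  assumes fin: "finite V" and C: "C \<subseteq> V" and V: "V \<noteq> {}"
    and deg: "\<And>x. x \<in> V \<Longrightarrow> card {y \<in> V. adj x y} = d"
    and inside: "\<And>x. x \<in> C \<Longrightarrow> card {y \<in> C. adj x y} = a"
    and outside: "\<And>x. x \<in> V - C \<Longrightarrow> card {y \<in> C. adj x y} = c"
    and "a < d" "0 < c"
  shows "equitable_partition V adj 2 (\<lambda>i. if i = 1 then C else V - C)
           (\<lambda>i j. if i = 1 then (if j = 1 then a else d - a) else (if j = 1 then c else d - c))"
proof -
  have complement: "card {y \<in> V - C. adj x y} = d - card {y \<in> C. adj x y}" if "x \<in> V" for x
  proof -
    have "{y \<in> V - C. adj x y} = {y \<in> V. adj x y} - {y \<in> C. adj x y}"
      using C by blast
    moreover have "{y \<in> C. adj x y} \<subseteq> {y \<in> V. adj x y}" "finite {y \<in> C. adj x y}"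
      using C fin by (auto intro: finite_subset)
    ultimately show ?thesis
      using deg[OF that] by (simp add: card_Diff_subset)
  qed
  have "C \<noteq> {} \<and> V - C \<noteq> {}"
  proof -
    obtain x where x: "x \<in> V"
      using V by blast
    show ?thesis
    proof (cases "x \<in> C")
      case True
      then have "card {y \<in> V - C. adj x y} > 0"
        using complement[OF x] inside \<open>a < d\<close> by simp
      then show ?thesis
        using True by (auto simp: card_gt_0_iff)
    next
      case False
      then have "card {y \<in> C. adj x y} > 0"
        using outside x \<open>0 < c\<close> by simp
      then show ?thesis
        using False x by (auto simp: card_gt_0_iff)
    qed
  qed
  moreover have "{1..2::nat} = {1, 2}"
    by auto
  ultimately show ?thesis
    unfolding equitable_partition_def
    using C inside outside complement by auto
qed

theorem mainTheorem3:
  fixes w :: nat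
  assumes "w \<ge> 3"
  shows "equitable_partition (johnson_vertices (2*w) w) (johnson_adj w) 2
           (\<lambda>i. if i = 1 then C1 w else C2 w)
           (\<lambda>i j. if i = 1 then (if j = 1 then w^2 - 3*w + 2 else 3*w - 2)
                  else (if j = 1 then w else w^2 - w))"
proof -
  let ?V = "johnson_vertices (2 * w) w"
  have C1_subset: "C1 w \<subseteq> ?V"
    by (auto simp: C1_def)
  have square: "3 * w \<le> w\<^sup>2"
    using assms by (simp add: power2_eq_square)
  have "equitable_partition ?V (johnson_adj w) 2 (\<lambda>i. if i = 1 then C1 w else ?V - C1 w)
      (\<lambda>i j. if i = 1 then (if j = 1 then w\<^sup>2 - 3 * w + 2 else w\<^sup>2 - (w\<^sup>2 - 3 * w + 2))
             else (if j = 1 then w else w\<^sup>2 - w))"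
  proof (rule equitable_partition_complementI[OF finite_johnson_vertices C1_subset])
    show "?V \<noteq> {}"
      using replicate_in_johnson_vertices[of w w] by (auto simp: mult_2)
    show "card {y \<in> ?V. johnson_adj w x y} = w\<^sup>2" if "x \<in> ?V" for x
      using card_johnson_neighbours[OF that] assms by (simp add: power2_eq_square)
    show "card {y \<in> C1 w. johnson_adj w x y} = w\<^sup>2 - 3 * w + 2" if "x \<in> C1 w" for x
      using card_C1_neighbours[OF assms] that C1_subset by auto
    show "card {y \<in> C1 w. johnson_adj w x y} = w" if "x \<in> ?V - C1 w" for x
      using card_C1_neighbours[OF assms] that by auto
    show "w\<^sup>2 - 3 * w + 2 < w\<^sup>2" "0 < w"
      using assms square by linarith+
  qed
  moreover have "w\<^sup>2 - (w\<^sup>2 - 3 * w + 2) = 3 * w - 2"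
    using assms square by linarith
  ultimately show ?thesis
    by (simp only: C2_def)
qed

end
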